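(* Assume the standing assumptions below and let $X_*$ be the unique symmetric positive semidefinite solution of $\mathscr R(X)=0$, where $\mathscr R(X)=A^{\mathsf T}X+XA+Q+\Pi_{11}(X)-[XB+L+\Pi_{12}(X)][R+\Pi_{22}(X)]^{-1}[XB+L+\Pi_{12}(X)]^{\mathsf T}$. Consider the modified Newton iteration: given symmetric $X_0$, for $k\ge0$ let $X_{k+1}$ be the solution of $$\widehat A_k^{\mathsf T}X_{k+1}+X_{k+1}\widehat A_k+\widehat\Pi_k(X_k)+M_k=0,$$ with $R_k=R+\Pi_{22}(X_k)$, $S_k=X_kB+L+\Pi_{12}(X_k)$, $\widehat A_k=A-BR_k^{-1}S_k^{\mathsf T}$, $P_k=\begin{bmatrix}I_n\\-R_k^{-1}S_k^{\mathsf T}\end{bmatrix}$, $\widehat\Pi_k(X)=P_k^{\mathsf T}\Pi(X)P_k$, $M_k=P_k^{\mathsf T}\begin{bmatrix}Q&L\\L^{\mathsf T}&R\end{bmatrix}P_k$. Suppose $X_0\succeq X_*$, $A_{\mathrm c}(X_0)-G_{\mathrm c}(X_0)X_0$ has all eigenvalues in the open left half-plane, and $\mathscr R(X_0)\preceq0$. If the sequence $\{X_k\}$ exists and $X_k\succeq0$ for all $k$, then (a) $X_0\succeq X_1\succeq\cdots\succeq X_k\succeq X_*$ and $\mathscr R(X_k)\preceq0$ for $k\ge0$; (b) $\lim_{k\to\infty}X_k=X_*$.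
   Context: Data: $A,Q\in\mathbb{R}^{n\times n}$, $B,L\in\mathbb{R}^{n\times m}$, $R\in\mathbb{R}^{m\times m}$, $A_0^i\in\mathbb{R}^{n\times n}$, $B_0^i\in\mathbb{R}^{n\times m}$ ($i=1,\dots,r$); $A_0^0=A$, $B_0^0=B$. For symmetric $X$: $\Pi(X)=\begin{bmatrix}\Pi_{11}(X)&\Pi_{12}(X)\\\Pi_{12}(X)^{\mathsf T}&\Pi_{22}(X)\end{bmatrix}$ with $\Pi_{11}(X)=\sum_{i=1}^r (A_0^i)^{\mathsf T}XA_0^i$, $\Pi_{12}(X)=\sum_i (A_0^i)^{\mathsf T}XB_0^i$, $\Pi_{22}(X)=\sum_i (B_0^i)^{\mathsf T}XB_0^i$; $L_{\mathrm c}=L+\Pi_{12}$, $R_{\mathrm c}=R+\Pi_{22}$; $A_{\mathrm c}(X)=A-BR_{\mathrm c}(X)^{-1}L_{\mathrm c}(X)^{\mathsf T}$, $G_{\mathrm c}(X)=BR_{\mathrm c}(X)^{-1}B^{\mathsf T}$. Standing assumptions: (1) $R\succ0$, $\begin{bmatrix}Q&L\\L^{\mathsf T}&R\end{bmatrix}\succeq0$; (2) there is $F\in\mathbb{R}^{m\times n}$ with $\dot S=(A+BF)S+S(A+BF)^{\mathsf T}+\sum_{i=1}^r(A_0^i+B_0^iF)S(A_0^i+B_0^iF)^{\mathsf T}$ exponentially stable; (3) with $C^{\mathsf T}C=Q-LR^{-1}L^{\mathsf T}$, $C\in\mathbb{R}^{p\times n}$, and $\widetilde A_0^i=A_0^i-B_0^iR^{-1}L^{\mathsf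 T}$, there is $K\in\mathbb{R}^{n\times p}$ with $\dot S=(\widetilde A_0^0+KC)S+S(\widetilde A_0^0+KC)^{\mathsf T}+\sum_{i=1}^r\widetilde A_0^iS(\widetilde A_0^i)^{\mathsf T}$ exponentially stable; (4) $\mathcal N(Q-LR^{-1}L^{\mathsf T})\subseteq\mathcal N(L^{\mathsf T})\cap\bigcap_i\mathcal N(A_0^i)$; (5) $(A,B)$ stabilizable and $(Q-LR^{-1}L^{\mathsf T},A)$ detectable. Under (1)–(3), $\mathscr R(X)=0$ has a unique positive semidefinite solution $X_*$, which is stabilizing. *)

theory Defs
  imports "HOL-Analysis.Analysis"
begin

text \<open>Matrices are HOL-Analysis matrices: an n x m real matrix is of type real^'m^'n
  (rows indexed by 'n, columns by 'm). Block matrices are indexed by the sum type.\<close>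

definition psd :: "real^'n^'n \<Rightarrow> bool" where
  "psd M \<longleftrightarrow> transpose M = M \<and> (\<forall>x. x \<bullet> (M *v x) \<ge> 0)"

definition pd :: "real^'n^'n \<Rightarrow> bool" where
  "pd M \<longleftrightarrow> transpose M = M \<and> (\<forall>x. x \<noteq> 0 \<longrightarrow> x \<bullet> (M *v x) > 0)"

definition loewner_ge :: "real^'n^'n \<Rightarrow> real^'n^'n \<Rightarrow> bool" where
  "loewner_ge X Y \<longleftrightarrow> psd (X - Y)"

definition blockm :: "real^'b^'a \<Rightarrow> real^'d^'a \<Rightarrow> real^'b^'c \<Rightarrow> real^'d^'c
     \<Rightarrow> real^('b + 'd)^('a + 'c)" where
  "blockm M11 M12 M21 M22 = (\<chi> i j. case i of
       Inl a \<Rightarrow> (case j of Inl b \<Rightarrow> M11 $ a $ b | Inr d \<Rightarrow> M12 $ a $ d)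
     | Inr c \<Rightarrow> (case j of Inl b \<Rightarrow> M21 $ c $ b | Inr d \<Rightarrow> M22 $ c $ d))"

definition vstack :: "real^'b^'a \<Rightarrow> real^'b^'c \<Rightarrow> real^'b^('a + 'c)" where
  "vstack U V = (\<chi> i j. case i of Inl a \<Rightarrow> U $ a $ j | Inr c \<Rightarrow> V $ c $ j)"

definition cmat :: "real^'m^'n \<Rightarrow> complex^'m^'n" where
  "cmat M = (\<chi> i j. complex_of_real (M $ i $ j))"

definition hurwitz :: "real^'n^'n \<Rightarrow> bool" where
  "hurwitz M \<longleftrightarrow> (\<forall>(z::complex) (v::complex^'n). v \<noteq> 0 \<and> cmat M *v v = z *s v \<longrightarrow> Re z < 0)"

definition exp_stable :: "(real^'n^'n \<Rightarrow> real^'n^'n) \<Rightarrow> bool" where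
  "exp_stable Op \<longleftrightarrow> (\<exists>M c. c > 0 \<and>
     (\<forall>S. (\<forall>t\<ge>0. (S has_vector_derivative Op (S t)) (at t within {0..})) \<longrightarrow>
          (\<forall>t\<ge>0. norm (S t) \<le> M * exp (- c * t) * norm (S 0))))"

definition Pi11 :: "nat \<Rightarrow> (nat \<Rightarrow> real^'n^'n) \<Rightarrow> real^'n^'n \<Rightarrow> real^'n^'n" where
  "Pi11 r A0 X = (\<Sum>i\<in>{1..r}. transpose (A0 i) ** X ** A0 i)"

definition Pi12 :: "nat \<Rightarrow> (nat \<Rightarrow> real^'n^'n) \<Rightarrow> (nat \<Rightarrow> real^'m^'n) \<Rightarrow> real^'n^'n \<Rightarrow> real^'m^'n" where
  "Pi12 r A0 B0 X = (\<Sum>i\<in>{1..r}. transpose (A0 i) ** X ** B0 i)"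

definition Pi22 :: "nat \<Rightarrow> (nat \<Rightarrow> real^'m^'n) \<Rightarrow> real^'n^'n \<Rightarrow> real^'m^'m" where
  "Pi22 r B0 X = (\<Sum>i\<in>{1..r}. transpose (B0 i) ** X ** B0 i)"

definition PiM :: "nat \<Rightarrow> (nat \<Rightarrow> real^'n^'n) \<Rightarrow> (nat \<Rightarrow> real^'m^'n) \<Rightarrow> real^'n^'n
     \<Rightarrow> real^('n + 'm)^('n + 'm)" where
  "PiM r A0 B0 X = blockm (Pi11 r A0 X) (Pi12 r A0 B0 X) (transpose (Pi12 r A0 B0 X)) (Pi22 r B0 X)"

definition Lc :: "real^'m^'n \<Rightarrow> nat \<Rightarrow> (nat \<Rightarrow> real^'n^'n) \<Rightarrow> (nat \<Rightarrow> real^'m^'n) \<Rightarrow> real^'n^'n \<Rightarrow> real^'m^'n" where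
  "Lc L r A0 B0 X = L + Pi12 r A0 B0 X"

definition Rc :: "real^'m^'m \<Rightarrow> nat \<Rightarrow> (nat \<Rightarrow> real^'m^'n) \<Rightarrow> real^'n^'n \<Rightarrow> real^'m^'m" where
  "Rc R r B0 X = R + Pi22 r B0 X"

definition Ac :: "real^'n^'n \<Rightarrow> real^'m^'n \<Rightarrow> real^'m^'n \<Rightarrow> real^'m^'m \<Rightarrow> nat
     \<Rightarrow> (nat \<Rightarrow> real^'n^'n) \<Rightarrow> (nat \<Rightarrow> real^'m^'n) \<Rightarrow> real^'n^'n \<Rightarrow> real^'n^'n" where
  "Ac A B L R r A0 B0 X = A - B ** matrix_inv (Rc R r B0 X) ** transpose (Lc L r A0 B0 X)"

definition Gc :: "real^'m^'n \<Rightarrow> real^'m^'m \<Rightarrow> nat \<Rightarrow> (nat \<Rightarrow> real^'m^'n) \<Rightarrow> real^'n^'n \<Rightarrow> real^'n^'n" where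
  "Gc B R r B0 X = B ** matrix_inv (Rc R r B0 X) ** transpose B"

definition Ric :: "real^'n^'n \<Rightarrow> real^'m^'n \<Rightarrow> real^'n^'n \<Rightarrow> real^'m^'n \<Rightarrow> real^'m^'m \<Rightarrow> nat
     \<Rightarrow> (nat \<Rightarrow> real^'n^'n) \<Rightarrow> (nat \<Rightarrow> real^'m^'n) \<Rightarrow> real^'n^'n \<Rightarrow> real^'n^'n" where
  "Ric A B Q L R r A0 B0 X =
     transpose A ** X + X ** A + Q + Pi11 r A0 X
     - (X ** B + L + Pi12 r A0 B0 X) ** matrix_inv (R + Pi22 r B0 X) ** transpose (X ** B + L + Pi12 r A0 B0 X)"

end

theory Submission
  imports Defs "Jordan_Normal_Form.Spectral_Radius"
begin

text \<open>The Newton iterate X_(k+1) solves a Lyapunov equation for the closed loop A + B F_k with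
  the feedback F_k = - R_c(X_k)\<inverse> S_k^T. Completing the square in F shows that the closed-loop
  expression at a positive semidefinite Y dominates \<R>(Y), with equality for the feedback of Y.
  Hence \<R>(X_k) \<preceq> 0 together with detectability makes A + B F_k Hurwitz, and every symmetric
  solution of a Lyapunov inequality for a Hurwitz matrix is positive semidefinite, which is proved
  through the Cayley transform and the decay of powers of a matrix with spectral radius below 1. It gives
  X_k \<succeq> X_(k+1) \<succeq> X_* and \<R>(X_(k+1)) \<preceq> 0. The decreasing sequence, bounded
  below by X_*, converges, and by continuity its limit is a positive semidefinite solution of
  \<R>(X) = 0, i.e. X_*.\<close>

no_notation Matrix.vec_index (infixl "$" 100)
no_notation Matrix.scalar_prod (infix "\<bullet>" 70)
hide_const (open) Matrix.mat Matrix.vec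

definition hma_index :: "nat \<Rightarrow> 'n::finite" where
  "hma_index = (SOME h. bij_betw h {0..<CARD('n)} UNIV)"

lemma bij_betw_hma_index: "bij_betw (hma_index :: nat \<Rightarrow> 'n::finite) {0..<CARD('n)} UNIV"
proof -
  have "\<exists>h. bij_betw h {0..<CARD('n)} (UNIV :: 'n set)"
    using ex_bij_betw_nat_finite[of "UNIV :: 'n set"] by simp
  then show ?thesis unfolding hma_index_def by (rule someI_ex)
qed

lemma hma_index_surj:
  obtains i where "i < CARD('n)" "hma_index i = (l :: 'n::finite)"
  using bij_betw_hma_index[where 'n='n] unfolding bij_betw_def by (metis UNIV_I atLeastLessThan_iff imageE)

lemma hma_index_eq_iff:
  "i < CARD('n) \<Longrightarrow> j < CARD('n) \<Longrightarrow> (hma_index i = (hma_index j :: 'n::finite)) = (i = j)"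
  using bij_betw_hma_index[where 'n='n] unfolding bij_betw_def inj_on_def by auto

lemma sum_hma_index: "(\<Sum>k = 0..<CARD('n). f (hma_index k :: 'n::finite)) = sum f UNIV"
  using sum.reindex_bij_betw[OF bij_betw_hma_index, of f] by simp

definition from_hma_m :: "'a^'n^'n \<Rightarrow> 'a mat" where
  "from_hma_m M = Matrix.mat CARD('n) CARD('n) (\<lambda>(i, j). M $ hma_index i $ hma_index j)"

definition from_hma_v :: "'a^'n \<Rightarrow> 'a vec" where
  "from_hma_v v = Matrix.vec CARD('n) (\<lambda>i. v $ hma_index i)"

lemma from_hma_m_dim [simp]:
  "dim_row (from_hma_m (M :: 'a^'n^'n)) = CARD('n)" "dim_col (from_hma_m M) = CARD('n)"
  by (simp_all add: from_hma_m_def)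

lemma from_hma_m_carrier: "from_hma_m (M :: 'a^'n^'n) \<in> carrier_mat CARD('n) CARD('n)"
  by (simp add: carrier_matI)

lemma from_hma_m_mult: "from_hma_m ((M :: 'a::semiring_1^'n^'n) ** N) = from_hma_m M * from_hma_m N"
  by (rule eq_matI)
    (auto simp: from_hma_m_def matrix_matrix_mult_def scalar_prod_def sum_hma_index[symmetric])

lemma from_hma_m_one: "from_hma_m (mat 1 :: 'a::semiring_1^'n^'n) = 1\<^sub>m CARD('n)"
  by (rule eq_matI) (auto simp: from_hma_m_def Finite_Cartesian_Product.mat_def hma_index_eq_iff)

lemma from_hma_mult_vec: "from_hma_m (M :: 'a::semiring_1^'n^'n) *\<^sub>v from_hma_v v = from_hma_v (M *v v)"
  by (rule eq_vecI)
    (auto simp: from_hma_m_def from_hma_v_def matrix_vector_mult_def scalar_prod_def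
      sum_hma_index[symmetric])

lemma from_hma_v_smult: "from_hma_v (c *s v) = c \<cdot>\<^sub>v from_hma_v v"
  by (rule eq_vecI) (auto simp: from_hma_v_def)

lemma from_hma_v_zero: "from_hma_v (0 :: 'a::zero^'n) = 0\<^sub>v CARD('n)"
  by (rule eq_vecI) (auto simp: from_hma_v_def)

lemma from_hma_v_inject: "from_hma_v v = from_hma_v w \<longleftrightarrow> v = (w :: 'a^'n)"
proof
  assume eq: "from_hma_v v = from_hma_v w"
  show "v = w"
  proof (rule Finite_Cartesian_Product.vec_eq_iff[THEN iffD2], rule allI)
    fix l :: 'n
    obtain i where "i < CARD('n)" "hma_index i = l" by (rule hma_index_surj)
    then show "v $ l = w $ l" using arg_cong[OF eq, of "\<lambda>u. vec_index u i"] by (simp add: from_hma_v_def)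
  qed
qed simp

lemma from_hma_v_surj:
  assumes "w \<in> carrier_vec CARD('n)"
  obtains v :: "'a^'n" where "w = from_hma_v v"
proof
  show "w = from_hma_v (\<chi> l. vec_index w (inv_into {0..<CARD('n)} hma_index l) :: 'a^'n)"
    using assms bij_betw_hma_index[where 'n='n]
    by (intro eq_vecI) (auto simp: from_hma_v_def bij_betw_def)
qed

lemma eigenvalue_from_hma_m:
  "eigenvalue (from_hma_m (M :: 'a::comm_ring_1^'n^'n)) z \<longleftrightarrow> (\<exists>v. v \<noteq> 0 \<and> M *v v = z *s v)"
proof
  assume "eigenvalue (from_hma_m M) z"
  then obtain w where w: "w \<in> carrier_vec CARD('n)" "w \<noteq> 0\<^sub>v CARD('n)"
      "from_hma_m M *\<^sub>v w = z \<cdot>\<^sub>v w"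
    unfolding eigenvalue_def eigenvector_def by (auto simp: from_hma_m_def)
  obtain v :: "'a^'n" where "w = from_hma_v v" using w(1) by (rule from_hma_v_surj)
  then show "\<exists>v. v \<noteq> 0 \<and> M *v v = z *s v"
    using w(2,3) by (metis from_hma_mult_vec from_hma_v_inject from_hma_v_smult from_hma_v_zero)
next
  assume "\<exists>v. v \<noteq> 0 \<and> M *v v = z *s v"
  then obtain v where "v \<noteq> 0" "M *v v = z *s v" by blast
  then show "eigenvalue (from_hma_m M) z"
    unfolding eigenvalue_def eigenvector_def
    by (intro exI[of _ "from_hma_v v"])
      (auto simp: from_hma_mult_vec from_hma_v_smult from_hma_v_inject from_hma_v_zero[symmetric],
       simp add: from_hma_v_def)
qed

primrec matpow :: "'a::semiring_1^'n^'n \<Rightarrow> nat \<Rightarrow> 'a^'n^'n" where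
  "matpow M 0 = mat 1"
| "matpow M (Suc k) = matpow M k ** M"

lemma from_hma_m_matpow: "from_hma_m (matpow M k) = from_hma_m M ^\<^sub>m k"
  by (induction k) (simp_all add: from_hma_m_one from_hma_m_mult)

lemma matpow_scaleR: "matpow (c *\<^sub>R M :: 'a::real_algebra_1^'n^'n) k = c ^ k *\<^sub>R matpow M k"
  by (induction k) (simp_all add: matrix_scalar_ac scalar_matrix_assoc[symmetric])

lemma matrix_scaleR_vector_mult: "(c *\<^sub>R M) *v v = c *\<^sub>R (M *v (v :: 'a::real_algebra_1^'m))"
  by (simp add: Finite_Cartesian_Product.vec_eq_iff matrix_vector_mult_def scaleR_sum_right)

section \<open>Spectral radius and decay of matrix powers\<close>

lemma spectrum_from_hma_m: "spectrum (from_hma_m M) = {z. \<exists>v. v \<noteq> 0 \<and> M *v v = z *s v}"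
  by (auto simp: spectrum_def eigenvalue_from_hma_m)

lemma spectral_radius_from_hma_m:
  fixes M :: "complex^'n^'n"
  shows "\<exists>z v. v \<noteq> 0 \<and> M *v v = z *s v \<and> cmod z = spectral_radius (from_hma_m M)"
    and "v \<noteq> 0 \<Longrightarrow> M *v v = z *s v \<Longrightarrow> cmod z \<le> spectral_radius (from_hma_m M)"
  using spectral_radius_mem_max[OF from_hma_m_carrier[of M] zero_less_card_finite]
  unfolding spectrum_from_hma_m by (fastforce, auto)

lemma matpow_bounded:
  fixes M :: "complex^'n^'n"
  assumes "\<forall>z v. v \<noteq> 0 \<and> M *v v = z *s v \<longrightarrow> cmod z < 1"
  obtains c where "\<And>k i j. cmod (matpow M k $ i $ j) \<le> c"
proof -
  have "spectral_radius (from_hma_m M) < 1"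
    using spectral_radius_from_hma_m(1)[of M] assms by metis
  then obtain c where c: "\<forall>k. norm_bound (from_hma_m M ^\<^sub>m k) c"
    using spectral_radius_jnf_norm_bound_less_1_upper_triangular[OF from_hma_m_carrier] by blast
  have "cmod (matpow M k $ i $ j) \<le> c" for k i j
  proof -
    obtain a b where "a < CARD('n)" "hma_index a = i" "b < CARD('n)" "hma_index b = j"
      by (metis hma_index_surj)
    then show ?thesis
      using c unfolding norm_bound_def from_hma_m_matpow[symmetric] by (force simp: from_hma_m_def)
  qed
  then show thesis by (rule that)
qed

text \<open>Scaling by the inverse of any r strictly between the spectral radius and 1 turns the
  bounded powers of the scaled matrix into geometric decay of the original ones.\<close>

lemma matpow_decay:
  fixes M :: "complex^'n^'n"
  assumes eig: "\<forall>z v. v \<noteq> 0 \<and> M *v v = z *s v \<longrightarrow> cmod z < 1"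
  obtains c r where "0 < r" "r < 1" "\<And>k i j. cmod (matpow M k $ i $ j) \<le> c * r ^ k"
proof -
  define \<rho> where "\<rho> = spectral_radius (from_hma_m M)"
  have \<rho>: "0 \<le> \<rho>" "\<rho> < 1"
    using spectral_radius_from_hma_m(1)[of M] eig unfolding \<rho>_def by (metis norm_ge_zero)+
  define r where "r = (1 + \<rho>) / 2"
  have r: "0 < r" "r < 1" "\<rho> < r" using \<rho> by (auto simp: r_def)
  have "\<forall>z v. v \<noteq> 0 \<and> (inverse r *\<^sub>R M) *v v = z *s v \<longrightarrow> cmod z < 1"
  proof (intro allI impI, elim conjE)
    fix z v assume "v \<noteq> 0" and "(inverse r *\<^sub>R M) *v v = z *s v"
    moreover have "M *v v = r *\<^sub>R ((inverse r *\<^sub>R M) *v v)"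
      using r(1) by (simp add: matrix_scaleR_vector_mult)
    ultimately have "M *v v = (of_real r * z) *s v"
      by (simp add: Finite_Cartesian_Product.vec_eq_iff scaleR_conv_of_real[where 'a = complex])
    then have "cmod (of_real r * z) \<le> \<rho>"
      unfolding \<rho>_def by (rule spectral_radius_from_hma_m(2)[OF \<open>v \<noteq> 0\<close>])
    then have "r * cmod z \<le> \<rho>" using r(1) by (simp add: norm_mult)
    then show "cmod z < 1" using r by (smt (verit) mult_less_cancel_left2)
  qed
  then obtain c where c: "\<And>k i j. cmod (matpow (inverse r *\<^sub>R M) k $ i $ j) \<le> c"
    by (rule matpow_bounded) blast
  have "cmod (matpow M k $ i $ j) \<le> c * r ^ k" for k i j
    using c[of k i j] r(1) by (simp add: matpow_scaleR power_inverse field_simps)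
  then show thesis using r by (intro that) auto
qed

lemma cmat_nth [simp]: "cmat M $ i $ j = complex_of_real (M $ i $ j)"
  by (simp add: cmat_def)

lemma cmat_mult: "cmat ((A :: real^'m^'n) ** (B :: real^'k^'m)) = cmat A ** cmat B"
  by (simp add: cmat_def Finite_Cartesian_Product.vec_eq_iff matrix_matrix_mult_def)

lemma cmat_add: "cmat (A + B) = cmat A + cmat B"
  by (simp add: cmat_def Finite_Cartesian_Product.vec_eq_iff)

lemma cmat_diff: "cmat (A - B) = cmat A - cmat B"
  by (simp add: cmat_def Finite_Cartesian_Product.vec_eq_iff)

lemma cmat_one: "cmat (mat 1 :: real^'n^'n) = mat 1"
  by (simp add: cmat_def Finite_Cartesian_Product.vec_eq_iff Finite_Cartesian_Product.mat_def)

definition cvec :: "real^'n \<Rightarrow> complex^'n" where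
  "cvec x = (\<chi> i. complex_of_real (x $ i))"

lemma cvec_nth [simp]: "cvec x $ i = complex_of_real (x $ i)"
  by (simp add: cvec_def)

lemma cvec_eq_0_iff: "cvec x = 0 \<longleftrightarrow> x = 0"
  by (simp add: Finite_Cartesian_Product.vec_eq_iff)

lemma cmat_cvec: "cmat A *v cvec x = cvec (A *v x)"
  by (simp add: Finite_Cartesian_Product.vec_eq_iff matrix_vector_mult_def)

lemma cmat_matpow: "cmat (matpow B k) = matpow (cmat B) k"
  by (induction k) (simp_all add: cmat_one cmat_mult)

definition schur_stable :: "real^'n^'n \<Rightarrow> bool" where
  "schur_stable M \<longleftrightarrow>
     (\<forall>(z::complex) (v::complex^'n). v \<noteq> 0 \<and> cmat M *v v = z *s v \<longrightarrow> cmod z < 1)"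

lemma schur_stable_matpow_tendsto_0:
  fixes B :: "real^'n^'n"
  assumes "schur_stable B"
  shows "(\<lambda>k. matpow B k *v x) \<longlonglongrightarrow> 0"
proof -
  obtain c r where r: "0 < r" "r < 1" and bound: "\<And>k i j. cmod (matpow (cmat B) k $ i $ j) \<le> c * r ^ k"
    using assms unfolding schur_stable_def by (rule matpow_decay) blast
  have entry: "(\<lambda>k. matpow B k $ i $ j) \<longlonglongrightarrow> 0" for i j
  proof (rule Lim_null_comparison)
    show "\<forall>\<^sub>F k in sequentially. norm (matpow B k $ i $ j) \<le> c * r ^ k"
      using bound[of _ i j] by (simp add: cmat_matpow[symmetric])
    show "(\<lambda>k. c * r ^ k) \<longlonglongrightarrow> 0"
      using r by (intro tendsto_mult_right_zero LIMSEQ_power_zero) auto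
  qed
  show ?thesis
  proof (rule vec_tendstoI)
    fix i
    have "(\<lambda>k. \<Sum>j\<in>UNIV. matpow B k $ i $ j * x $ j) \<longlonglongrightarrow> (\<Sum>j\<in>UNIV. 0 * x $ j)"
      by (intro tendsto_sum tendsto_mult entry tendsto_const)
    then show "(\<lambda>k. (matpow B k *v x) $ i) \<longlonglongrightarrow> (0 :: real^'n) $ i"
      by (simp add: matrix_vector_mult_def)
  qed
qed

lemma matrix_transpose_add: "transpose (A + B) = transpose A + transpose (B :: 'a::ring_1^'n^'m)"
  by (simp add: Finite_Cartesian_Product.vec_eq_iff transpose_def)

lemma matrix_transpose_diff: "transpose (A - B) = transpose A - transpose (B :: 'a::ring_1^'n^'m)"
  by (simp add: Finite_Cartesian_Product.vec_eq_iff transpose_def)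

lemma matrix_transpose_minus: "transpose (- A) = - transpose (A :: 'a::ring_1^'n^'m)"
  by (simp add: Finite_Cartesian_Product.vec_eq_iff transpose_def)

lemma matrix_transpose_zero: "transpose 0 = (0 :: 'a::ring_1^'n^'m)"
  by (simp add: Finite_Cartesian_Product.vec_eq_iff transpose_def)

lemma matrix_add_rdistrib: "(A + B) ** (C :: 'a::ring_1^'k^'n) = A ** C + B ** C"
  by (simp add: Finite_Cartesian_Product.vec_eq_iff matrix_matrix_mult_def distrib_right sum.distrib)

lemma matrix_diff_ldistrib: "(A :: 'a::ring_1^'n^'m) ** (B - C) = A ** B - A ** C"
  by (simp add: Finite_Cartesian_Product.vec_eq_iff matrix_matrix_mult_def right_diff_distrib sum_subtractf)

lemma matrix_diff_rdistrib: "(A - B) ** (C :: 'a::ring_1^'k^'n) = A ** C - B ** C"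
  by (simp add: Finite_Cartesian_Product.vec_eq_iff matrix_matrix_mult_def left_diff_distrib sum_subtractf)

lemma matrix_minus_mult: "(- A) ** (B :: 'a::ring_1^'k^'n) = - (A ** B)"
  by (simp add: Finite_Cartesian_Product.vec_eq_iff matrix_matrix_mult_def sum_negf)

lemma matrix_mult_minus: "(A :: 'a::ring_1^'n^'m) ** (- B) = - (A ** B)"
  by (simp add: Finite_Cartesian_Product.vec_eq_iff matrix_matrix_mult_def sum_negf)

lemma matrix_minus_vector_mult: "(- A) *v (x :: 'a::ring_1^'n) = - (A *v x)"
  by (simp add: Finite_Cartesian_Product.vec_eq_iff matrix_vector_mult_def sum_negf)

lemma matrix_vector_mult_minus: "A *v (- x) = - (A *v (x :: 'a::ring_1^'n))"
  by (simp add: Finite_Cartesian_Product.vec_eq_iff matrix_vector_mult_def sum_negf)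

lemma matrix_transpose_sum: "transpose (sum f I) = (\<Sum>i\<in>I. transpose (f i :: 'a::ring_1^'n^'m))"
  by (induction I rule: infinite_finite_induct) (simp_all add: matrix_transpose_zero matrix_transpose_add)

lemma matrix_sum_mult: "sum f I ** (A :: 'a::ring_1^'k^'n) = (\<Sum>i\<in>I. f i ** A)"
  by (induction I rule: infinite_finite_induct) (simp_all add: matrix_add_rdistrib)

lemma matrix_mult_sum: "(A :: 'a::ring_1^'n^'m) ** sum f I = (\<Sum>i\<in>I. A ** f i)"
  by (induction I rule: infinite_finite_induct) (simp_all add: matrix_add_ldistrib)

lemmas matrix_algebra_simps = matrix_transpose_add matrix_transpose_diff matrix_transpose_minus
  matrix_transpose_zero matrix_add_ldistrib matrix_add_rdistrib matrix_diff_ldistrib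
  matrix_diff_rdistrib matrix_minus_mult matrix_mult_minus matrix_mul_assoc[symmetric]
  matrix_transpose_mul

lemma inner_transpose_mult: "(u :: real^'n) \<bullet> (transpose A *v w) = (A *v u) \<bullet> w"
  by (simp add: dot_lmul_matrix[symmetric] inner_commute)

lemma inner_symmetric_matrix: "transpose M = M \<Longrightarrow> (u :: real^'n) \<bullet> (M *v w) = w \<bullet> (M *v u)"
  by (metis inner_commute inner_transpose_mult)

lemma matrix_inv_eq:
  fixes M :: "'a::field^'n^'n"
  assumes "M ** G = mat 1"
  shows "matrix_inv M = G"
proof -
  have GM: "G ** M = mat 1" using assms matrix_left_right_inverse by blast
  have inv: "M ** matrix_inv M = mat 1 \<and> matrix_inv M ** M = mat 1"
    unfolding matrix_inv_def using assms GM by (rule someI[of _ G, OF conjI])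
  have "matrix_inv M = G ** M ** matrix_inv M" using GM by simp
  also have "\<dots> = G" using inv by (simp add: matrix_mul_assoc[symmetric])
  finally show ?thesis .
qed

lemma psd_symmetric: "psd D \<Longrightarrow> transpose D = D"
  unfolding psd_def by simp

lemma psd_nonneg: "psd D \<Longrightarrow> 0 \<le> x \<bullet> (D *v x)"
  unfolding psd_def by simp

lemma psd_zero: "psd 0"
  unfolding psd_def by (simp add: matrix_transpose_zero)

lemma psd_add: "psd C \<Longrightarrow> psd D \<Longrightarrow> psd (C + D)"
  unfolding psd_def by (simp add: matrix_transpose_add matrix_vector_mult_add_rdistrib inner_add_right)

lemma psd_sum: "(\<And>i. i \<in> I \<Longrightarrow> psd (f i)) \<Longrightarrow> psd (sum f I)"
  by (induction I rule: infinite_finite_induct) (simp_all add: psd_zero psd_add)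

lemma psd_congruence:
  assumes "psd D"
  shows "psd (transpose P ** D ** P)"
  unfolding psd_def
proof
  show "transpose (transpose P ** D ** P) = transpose P ** D ** P"
    using psd_symmetric[OF assms] by (simp add: matrix_transpose_mul matrix_mul_assoc)
  have "x \<bullet> ((transpose P ** D ** P) *v x) = (P *v x) \<bullet> (D *v (P *v x))" for x
    by (simp only: matrix_vector_mul_assoc[symmetric] inner_transpose_mult)
  then show "\<forall>x. 0 \<le> x \<bullet> ((transpose P ** D ** P) *v x)"
    using psd_nonneg[OF assms] by simp
qed

lemma psd_form_eq_0_imp_kernel:
  assumes "psd D" and form: "x \<bullet> (D *v x) = 0"
  shows "D *v x = 0"
proof (rule ccontr)
  define y where "y = D *v x"
  define c where "c = y \<bullet> (D *v y)"
  assume "D *v x \<noteq> 0"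
  then have d: "0 < y \<bullet> y" by (simp add: y_def)
  have c: "0 \<le> c" unfolding c_def by (rule psd_nonneg[OF assms(1)])
  txt \<open>If D x \<noteq> 0, the form is negative at x - t D x for small t > 0.\<close>
  define t where "t = (y \<bullet> y) / (c + 1)"
  have t: "0 < t" using c d by (simp add: t_def)
  have "x \<bullet> (D *v y) = y \<bullet> y"
    using inner_symmetric_matrix[OF psd_symmetric[OF assms(1)], of x y] by (simp add: y_def)
  then have "(x - t *\<^sub>R y) \<bullet> (D *v (x - t *\<^sub>R y)) = t * (t * c - 2 * (y \<bullet> y))"
    using form by (simp add: matrix_vector_mult_diff_distrib inner_diff_left inner_diff_right
        matrix_vector_mult_scaleR c_def y_def algebra_simps)
  moreover have "t * c < 2 * (y \<bullet> y)"
    using c d by (auto simp: t_def field_simps intro!: add_nonneg_pos)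
  ultimately have "(x - t *\<^sub>R y) \<bullet> (D *v (x - t *\<^sub>R y)) < 0"
    using t by (simp add: mult_pos_neg)
  then show False using psd_nonneg[OF assms(1)] by (simp add: not_le[symmetric])
qed

lemma loewner_ge_0_iff: "loewner_ge 0 M \<longleftrightarrow> transpose M = M \<and> (\<forall>x. x \<bullet> (M *v x) \<le> 0)"
  unfolding loewner_ge_def psd_def
  by (auto simp: matrix_transpose_minus matrix_minus_vector_mult)

lemma pd_imp_psd: "pd R \<Longrightarrow> psd R"
  unfolding pd_def psd_def by (metis inner_zero_left order_le_less matrix_vector_mult_0_right)

lemma pd_add_psd: "pd R \<Longrightarrow> psd P \<Longrightarrow> pd (R + P)"
  unfolding pd_def psd_def
  by (simp add: matrix_transpose_add matrix_vector_mult_add_rdistrib inner_add_right add_pos_nonneg)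

lemma pd_matrix_inv:
  assumes "pd M"
  shows "M ** matrix_inv M = mat 1" "matrix_inv M ** M = mat 1"
    and "transpose (matrix_inv M) = matrix_inv M"
proof -
  have "\<forall>x. M *v x = 0 \<longrightarrow> x = 0" using assms unfolding pd_def by force
  then obtain G where GM: "G ** M = mat 1" using matrix_left_invertible_ker by blast
  then have MG: "M ** G = mat 1" using matrix_left_right_inverse by blast
  have inv: "matrix_inv M = G" using MG by (rule matrix_inv_eq)
  show "M ** matrix_inv M = mat 1" "matrix_inv M ** M = mat 1" using MG GM inv by simp_all
  have "M ** transpose G = mat 1"
    using arg_cong[OF GM, of transpose] assms by (simp add: matrix_transpose_mul pd_def)
  then have "matrix_inv M = transpose G" by (rule matrix_inv_eq)
  then show "transpose (matrix_inv M) = matrix_inv M" using inv by simp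
qed

section \<open>Lyapunov inequalities\<close>

definition lyap :: "real^'n^'n \<Rightarrow> real^'n^'n \<Rightarrow> real^'n^'n" where
  "lyap M Z = transpose M ** Z + Z ** M"

lemma lyap_diff: "lyap M (Z - Z') = lyap M Z - lyap M Z'"
  unfolding lyap_def by (simp add: matrix_diff_ldistrib matrix_diff_rdistrib)

lemma inner_lyap:
  assumes "transpose Z = Z"
  shows "x \<bullet> (lyap M Z *v x) = 2 * ((M *v x) \<bullet> (Z *v x))"
proof -
  have "x \<bullet> (lyap M Z *v x) = x \<bullet> (transpose M *v (Z *v x)) + x \<bullet> (Z *v (M *v x))"
    by (simp only: lyap_def matrix_vector_mult_add_rdistrib matrix_vector_mul_assoc[symmetric]
        inner_add_right)
  also have "\<dots> = (M *v x) \<bullet> (Z *v x) + (M *v x) \<bullet> (Z *v x)"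
    by (metis inner_transpose_mult inner_symmetric_matrix[OF assms])
  finally show ?thesis by simp
qed

lemma cayley_inverse_eq:
  fixes u a v \<mu> :: complex
  assumes "u - a = v" "u + a = \<mu> * v" "\<mu> \<noteq> -1"
  shows "a = (\<mu> - 1) / (\<mu> + 1) * u"
proof -
  have "(\<mu> - 1) * u - (\<mu> + 1) * a = \<mu> * (u - a) - (u + a)" by (simp add: algebra_simps)
  also have "\<dots> = 0" unfolding assms(1,2) by simp
  finally have "(\<mu> + 1) * a = (\<mu> - 1) * u" by simp
  moreover have "\<mu> + 1 \<noteq> 0" using assms(3) by (simp add: add_eq_0_iff2)
  ultimately show ?thesis by (simp add: eq_divide_eq mult.commute)
qed

lemma cmod_lt_1_if_Re_cayley_neg:
  assumes "Re ((\<mu> - 1) / (\<mu> + 1)) < 0"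
  shows "cmod \<mu> < 1"
proof -
  have "Re ((\<mu> - 1) * cnj (\<mu> + 1)) < 0" using assms by (simp add: Re_complex_div_lt_0)
  then have "(Re \<mu>)\<^sup>2 + (Im \<mu>)\<^sup>2 < 1" by (simp add: power2_eq_square algebra_simps)
  then show ?thesis unfolding cmod_def by simp
qed

text \<open>The Cayley transform (I + A)(I - A)\<inverse> maps the open left half-plane onto the open
  unit disc.\<close>

lemma hurwitz_cayley_schur_stable:
  fixes A C :: "real^'n^'n"
  assumes hur: "hurwitz A" and C: "(mat 1 - A) ** C = mat 1"
  shows "schur_stable ((mat 1 + A) ** C)"
  unfolding schur_stable_def
proof (intro allI impI, elim conjE)
  fix \<mu> :: complex and v :: "complex^'n"
  assume "v \<noteq> 0" and eig: "cmat ((mat 1 + A) ** C) *v v = \<mu> *s v"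
  define u where "u = cmat C *v v"
  define a where "a = cmat A *v u"
  have "cmat (mat 1 - A) *v u = v"
    using C unfolding u_def by (metis cmat_mult cmat_one matrix_vector_mul_assoc matrix_vector_mul_lid)
  then have minus: "u $ i - a $ i = v $ i" for i
    by (simp add: a_def cmat_diff cmat_one matrix_vector_mult_diff_rdistrib
        Finite_Cartesian_Product.vec_eq_iff)
  have "cmat (mat 1 + A) *v u = \<mu> *s v"
    using eig unfolding u_def by (simp add: cmat_mult matrix_vector_mul_assoc)
  then have plus: "u $ i + a $ i = \<mu> * v $ i" for i
    by (simp add: a_def cmat_add cmat_one matrix_vector_mult_add_rdistrib
        Finite_Cartesian_Product.vec_eq_iff)
  have "u \<noteq> 0"
  proof
    assume "u = 0"
    have "v $ i = 0" for i using minus[of i] unfolding a_def \<open>u = 0\<close> by simp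
    then show False using \<open>v \<noteq> 0\<close> by (simp add: Finite_Cartesian_Product.vec_eq_iff)
  qed
  have "\<mu> \<noteq> -1"
  proof
    assume "\<mu> = -1"
    have "u $ i = 0" for i
    proof -
      have "2 * u $ i = (u $ i - a $ i) + (u $ i + a $ i)" by simp
      also have "\<dots> = 0" unfolding minus plus \<open>\<mu> = -1\<close> by simp
      finally show ?thesis by simp
    qed
    then show False using \<open>u \<noteq> 0\<close> by (simp add: Finite_Cartesian_Product.vec_eq_iff)
  qed
  then have "cmat A *v u = ((\<mu> - 1) / (\<mu> + 1)) *s u"
    using cayley_inverse_eq[OF minus plus]
    by (simp add: a_def Finite_Cartesian_Product.vec_eq_iff)
  then have "Re ((\<mu> - 1) / (\<mu> + 1)) < 0"
    using hur \<open>u \<noteq> 0\<close> unfolding hurwitz_def by blast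
  then show "cmod \<mu> < 1" by (rule cmod_lt_1_if_Re_cayley_neg)
qed

lemma hurwitz_one_minus_invertible:
  assumes hur: "hurwitz (M :: real^'n^'n)"
  obtains C where "(mat 1 - M) ** C = mat 1"
proof -
  have "\<forall>x. (mat 1 - M) *v x = 0 \<longrightarrow> x = 0"
  proof (intro allI impI, rule ccontr)
    fix x :: "real^'n" assume "(mat 1 - M) *v x = 0" "x \<noteq> 0"
    then have "cmat M *v cvec x = 1 *s cvec x" "cvec x \<noteq> 0"
      by (simp_all add: cmat_cvec matrix_vector_mult_diff_rdistrib cvec_eq_0_iff)
    then show False using hur[unfolded hurwitz_def, rule_format, of "cvec x" 1] by simp
  qed
  then show thesis using that matrix_left_invertible_ker matrix_left_right_inverse by metis
qed

lemma cayley_form_nonincreasing: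
  fixes M D C :: "real^'n^'n"
  assumes sym: "transpose D = D" and nonpos: "loewner_ge 0 (lyap M D)"
    and C: "(mat 1 - M) ** C = mat 1"
  defines "B \<equiv> (mat 1 + M) ** C"
  shows "(B *v x) \<bullet> (D *v (B *v x)) \<le> x \<bullet> (D *v x)"
proof -
  define u where "u = C *v x"
  have "(mat 1 - M) *v u = x" by (simp add: u_def matrix_vector_mul_assoc C)
  then have x: "x = u - M *v u" by (simp add: matrix_vector_mult_diff_rdistrib)
  have Bx: "B *v x = u + M *v u"
    by (simp add: B_def u_def matrix_vector_mul_assoc[symmetric] matrix_vector_mult_add_rdistrib)
  have "(u + M *v u) \<bullet> (D *v (u + M *v u)) - (u - M *v u) \<bullet> (D *v (u - M *v u))
      = 4 * ((M *v u) \<bullet> (D *v u))"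
    using inner_symmetric_matrix[OF sym, of u "M *v u"]
    by (simp add: matrix_vector_right_distrib matrix_vector_mult_diff_distrib inner_add_left
        inner_add_right inner_diff_left inner_diff_right)
  also have "\<dots> = 2 * (u \<bullet> (lyap M D *v u))" by (simp add: inner_lyap[OF sym])
  also have "\<dots> \<le> 0" using nonpos unfolding loewner_ge_0_iff by (simp add: mult_le_0_iff)
  finally show ?thesis using x Bx by simp
qed

text \<open>Through the Cayley transform, the continuous-time Lyapunov inequality becomes the
  discrete-time one: the form of D does not increase along the iterates of a Schur stable map,
  which tend to 0.\<close>

lemma hurwitz_lyapunov_psd:
  fixes M D :: "real^'n^'n"
  assumes hur: "hurwitz M" and sym: "transpose D = D" and nonpos: "loewner_ge 0 (lyap M D)"
  shows "psd D"
proof -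
  obtain C where C: "(mat 1 - M) ** C = mat 1" using hur by (rule hurwitz_one_minus_invertible)
  define B where "B = (mat 1 + M) ** C"
  define V where "V x = x \<bullet> (D *v x)" for x
  have mono: "V (matpow B k *v x) \<le> V x" for k x
  proof (induction k arbitrary: x)
    case (Suc k)
    have "V (matpow B (Suc k) *v x) = V (matpow B k *v (B *v x))"
      by (simp add: matrix_vector_mul_assoc)
    also have "\<dots> \<le> V (B *v x)" by (rule Suc)
    also have "\<dots> \<le> V x"
      unfolding V_def B_def by (rule cayley_form_nonincreasing[OF sym nonpos C])
    finally show ?case .
  qed simp
  have lim: "(\<lambda>k. V (matpow B k *v x)) \<longlonglongrightarrow> 0" for x
  proof -
    have "(\<lambda>k. matpow B k *v x) \<longlonglongrightarrow> 0"
      using hurwitz_cayley_schur_stable[OF hur C] unfolding B_def[symmetric]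
      by (rule schur_stable_matpow_tendsto_0)
    then have "(\<lambda>k. V (matpow B k *v x)) \<longlonglongrightarrow> 0 \<bullet> (D *v 0)"
      unfolding V_def by (intro tendsto_inner bounded_linear.tendsto[OF matrix_vector_mul_bounded_linear])
    then show ?thesis by simp
  qed
  have "0 \<le> V x" for x using mono by (intro LIMSEQ_le_const2[OF lim]) auto
  then show ?thesis unfolding psd_def V_def using sym by simp
qed

definition Re_vec :: "complex^'n \<Rightarrow> real^'n" where
  "Re_vec v = (\<chi> i. Re (v $ i))"

definition Im_vec :: "complex^'n \<Rightarrow> real^'n" where
  "Im_vec v = (\<chi> i. Im (v $ i))"

lemma cmat_mult_Re_Im: "cmat N *v v = cvec (N *v Re_vec v) + \<i> *s cvec (N *v Im_vec v)"
  by (simp add: Finite_Cartesian_Product.vec_eq_iff matrix_vector_mult_def Re_vec_def Im_vec_def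
      complex_eq_iff Re_sum Im_sum)

lemma cmat_eigenvector_Re_Im:
  fixes M :: "real^'n^'n"
  assumes "cmat M *v v = z *s v"
  shows "M *v Re_vec v = Re z *\<^sub>R Re_vec v - Im z *\<^sub>R Im_vec v"
    and "M *v Im_vec v = Im z *\<^sub>R Re_vec v + Re z *\<^sub>R Im_vec v"
proof -
  have "(cvec (M *v Re_vec v) + \<i> *s cvec (M *v Im_vec v)) $ i = z * v $ i" for i
    using assms unfolding cmat_mult_Re_Im by simp
  then have "(M *v Re_vec v) $ i = Re z * Re (v $ i) - Im z * Im (v $ i)"
    and "(M *v Im_vec v) $ i = Im z * Re (v $ i) + Re z * Im (v $ i)" for i
    by (simp_all add: complex_eq_iff)
  then show "M *v Re_vec v = Re z *\<^sub>R Re_vec v - Im z *\<^sub>R Im_vec v"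
    and "M *v Im_vec v = Im z *\<^sub>R Re_vec v + Re z *\<^sub>R Im_vec v"
    by (simp_all add: Finite_Cartesian_Product.vec_eq_iff Re_vec_def Im_vec_def)
qed

lemma cmat_kernel_Re_Im: "N *v Re_vec v = 0 \<Longrightarrow> N *v Im_vec v = 0 \<Longrightarrow> cmat N *v v = 0"
  unfolding cmat_mult_Re_Im by (simp add: Finite_Cartesian_Product.vec_eq_iff)

lemma lyap_form_Re_Im:
  assumes sym: "transpose Y = Y" and eig: "cmat M *v v = z *s v"
  shows "Re_vec v \<bullet> (lyap M Y *v Re_vec v) + Im_vec v \<bullet> (lyap M Y *v Im_vec v)
    = 2 * Re z * (Re_vec v \<bullet> (Y *v Re_vec v) + Im_vec v \<bullet> (Y *v Im_vec v))"
proof -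
  let ?a = "Re_vec v" and ?b = "Im_vec v"
  have "?b \<bullet> (Y *v ?a) = ?a \<bullet> (Y *v ?b)" by (rule inner_symmetric_matrix[OF sym])
  then show ?thesis
    unfolding inner_lyap[OF sym] cmat_eigenvector_Re_Im[OF eig]
    by (simp add: inner_diff_left inner_add_left algebra_simps)
qed

lemma tendsto_matrix_mult:
  assumes "(A \<longlongrightarrow> a) F" "(B \<longlongrightarrow> b) F"
  shows "((\<lambda>k. (A k :: real^'m^'n) ** (B k :: real^'p^'m)) \<longlongrightarrow> a ** b) F"
proof (rule vec_tendstoI, rule vec_tendstoI)
  fix i j
  have "((\<lambda>k. \<Sum>l\<in>UNIV. A k $ i $ l * B k $ l $ j) \<longlongrightarrow> (\<Sum>l\<in>UNIV. a $ i $ l * b $ l $ j)) F"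
    by (intro tendsto_sum tendsto_mult tendsto_vec_nth assms)
  then show "((\<lambda>k. (A k ** B k) $ i $ j) \<longlongrightarrow> (a ** b) $ i $ j) F"
    by (simp add: matrix_matrix_mult_def)
qed

lemma tendsto_transpose:
  assumes "(A \<longlongrightarrow> a) F"
  shows "((\<lambda>k. transpose (A k :: real^'m^'n)) \<longlongrightarrow> transpose a) F"
proof (rule vec_tendstoI, rule vec_tendstoI)
  fix i j
  show "((\<lambda>k. transpose (A k) $ i $ j) \<longlongrightarrow> transpose a $ i $ j) F"
    unfolding transpose_def by (simp add: tendsto_vec_nth assms)
qed

lemma tendsto_matrix_vector_mult:
  assumes "(A \<longlongrightarrow> a) F" "(x \<longlongrightarrow> y) F"
  shows "((\<lambda>k. (A k :: real^'m^'n) *v x k) \<longlongrightarrow> a *v y) F"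
proof (rule vec_tendstoI)
  fix i
  have "((\<lambda>k. \<Sum>l\<in>UNIV. A k $ i $ l * x k $ l) \<longlongrightarrow> (\<Sum>l\<in>UNIV. a $ i $ l * y $ l)) F"
    by (intro tendsto_sum tendsto_mult tendsto_vec_nth assms)
  then show "((\<lambda>k. (A k *v x k) $ i) \<longlongrightarrow> (a *v y) $ i) F"
    by (simp add: matrix_vector_mult_def)
qed

lemma psd_limit:
  assumes lim: "X \<longlonglongrightarrow> Y" and psd: "\<And>k. psd (X k)"
  shows "psd Y"
proof -
  have "X \<longlonglongrightarrow> transpose Y"
    using tendsto_transpose[OF lim] psd_symmetric[OF psd] by simp
  then have "transpose Y = Y" using lim LIMSEQ_unique by blast
  moreover have "0 \<le> x \<bullet> (Y *v x)" for x
  proof (rule LIMSEQ_le_const)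
    show "(\<lambda>k. x \<bullet> (X k *v x)) \<longlonglongrightarrow> x \<bullet> (Y *v x)"
      by (intro tendsto_inner tendsto_const tendsto_matrix_vector_mult lim)
  qed (use psd_nonneg[OF psd] in auto)
  ultimately show ?thesis unfolding psd_def by simp
qed

lemma decseq_loewner_convergent:
  fixes X :: "nat \<Rightarrow> real^'n^'n"
  assumes dec: "\<And>k. loewner_ge (X k) (X (Suc k))" and lb: "\<And>k. loewner_ge (X k) Lb"
    and sym: "\<And>k. transpose (X k) = X k"
  obtains Y where "X \<longlonglongrightarrow> Y"
proof -
  have "\<exists>l. (\<lambda>k. x \<bullet> (X k *v x)) \<longlonglongrightarrow> l" for x
  proof -
    have "decseq (\<lambda>k. x \<bullet> (X k *v x))"
    proof (rule decseq_SucI)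
      show "x \<bullet> (X (Suc k) *v x) \<le> x \<bullet> (X k *v x)" for k
        using psd_nonneg[OF dec[of k, unfolded loewner_ge_def], of x]
        by (simp add: matrix_vector_mult_diff_rdistrib inner_diff_right)
    qed
    moreover have "\<forall>k. x \<bullet> (Lb *v x) \<le> x \<bullet> (X k *v x)"
      using psd_nonneg[OF lb[unfolded loewner_ge_def], where x = x]
      by (simp add: matrix_vector_mult_diff_rdistrib inner_diff_right)
    ultimately show ?thesis by (metis decseq_convergent)
  qed
  then obtain l where l: "\<And>x. (\<lambda>k. x \<bullet> (X k *v x)) \<longlonglongrightarrow> l x" by metis
  txt \<open>Polarization recovers the entries from the quadratic forms.\<close>
  define Y where "Y = (\<chi> i j. (l (axis i 1 + axis j 1) - l (axis i 1 - axis j 1)) / 4)"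
  have "X \<longlonglongrightarrow> Y"
  proof (rule vec_tendstoI, rule vec_tendstoI)
    fix i j
    let ?a = "axis i (1::real) :: real^'n" and ?b = "axis j (1::real) :: real^'n"
    have entry: "X k $ i $ j
        = ((?a + ?b) \<bullet> (X k *v (?a + ?b)) - (?a - ?b) \<bullet> (X k *v (?a - ?b))) / 4" for k
      using inner_symmetric_matrix[OF sym, of ?b k ?a]
      by (simp add: matrix_vector_right_distrib matrix_vector_mult_diff_distrib inner_add_left
          inner_add_right inner_diff_left inner_diff_right inner_axis inner_axis'
          matrix_vector_mul_component)
    have "(\<lambda>k. ((?a + ?b) \<bullet> (X k *v (?a + ?b)) - (?a - ?b) \<bullet> (X k *v (?a - ?b))) / 4)
        \<longlonglongrightarrow> (l (?a + ?b) - l (?a - ?b)) / 4"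
      by (intro tendsto_divide tendsto_diff l tendsto_const) simp
    then show "(\<lambda>k. X k $ i $ j) \<longlonglongrightarrow> Y $ i $ j"
      unfolding entry Y_def by simp
  qed
  then show thesis by (rule that)
qed

lemma pd_coercive:
  fixes R :: "real^'n^'n"
  assumes "pd R"
  obtains c where "0 < c" "\<And>x. c * (x \<bullet> x) \<le> x \<bullet> (R *v x)"
proof -
  let ?S = "sphere (0::real^'n) 1" and ?f = "\<lambda>x. x \<bullet> (R *v x)"
  have "axis undefined 1 \<in> ?S" by simp
  then have "?S \<noteq> {}" by blast
  moreover have "continuous_on ?S ?f"
    by (intro continuous_on_inner continuous_on_id
        matrix_vector_mult_linear_continuous_on[THEN continuous_on_compose2]) auto
  ultimately obtain x0 where x0: "x0 \<in> ?S" "\<And>y. y \<in> ?S \<Longrightarrow> ?f x0 \<le> ?f y"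
    using continuous_attains_inf[OF compact_sphere] by blast
  have "x0 \<noteq> 0" using x0(1) by auto
  then have "0 < ?f x0" using assms unfolding pd_def by blast
  moreover have "?f x0 * (x \<bullet> x) \<le> ?f x" for x
  proof (cases "x = 0")
    case False
    have "?f x0 \<le> ?f ((1 / norm x) *\<^sub>R x)" using False by (intro x0(2)) simp
    also have "\<dots> = ?f x / (norm x)\<^sup>2"
      by (simp add: matrix_vector_mult_scaleR power2_eq_square)
    finally show ?thesis using False by (simp add: pos_le_divide_eq power2_norm_eq_inner)
  qed simp
  ultimately show thesis by (rule that)
qed

lemma norm_matrix_inv_pd_add_psd_le:
  fixes R P :: "real^'m^'m"
  assumes "pd R" "psd P" and c: "0 < c" "\<And>x. c * (x \<bullet> x) \<le> x \<bullet> (R *v x)"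
  shows "norm (matrix_inv (R + P) *v w) \<le> norm w / c"
proof -
  define z where "z = matrix_inv (R + P) *v w"
  have w: "(R + P) *v z = w"
    by (simp add: z_def matrix_vector_mul_assoc pd_matrix_inv(1)[OF pd_add_psd[OF assms(1,2)]])
  have "c * (z \<bullet> z) \<le> z \<bullet> (R *v z) + z \<bullet> (P *v z)"
    using c(2)[of z] psd_nonneg[OF assms(2)] by (smt (verit))
  also have "\<dots> = z \<bullet> w" by (simp add: w[symmetric] matrix_vector_mult_add_rdistrib inner_add_right)
  also have "\<dots> \<le> norm z * norm w" by (rule norm_cauchy_schwarz)
  finally have "c * norm z * norm z \<le> norm z * norm w"
    by (simp add: power2_norm_eq_inner[symmetric] power2_eq_square mult.assoc)
  then have "c * norm z \<le> norm w"
    by (cases "norm z = 0") (auto simp: mult.commute[of c])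
  then show ?thesis using c(1) by (simp add: z_def pos_le_divide_eq mult.commute)
qed

lemma matrix_inv_pd_add_psd_diff:
  fixes R P P' :: "real^'m^'m"
  assumes "pd R" "psd P" "psd P'"
  shows "(matrix_inv (R + P) - matrix_inv (R + P')) *v y
    = matrix_inv (R + P) *v ((P' - P) *v (matrix_inv (R + P') *v y))"
proof -
  note inv = pd_matrix_inv[OF pd_add_psd[OF assms(1,2)]]
    and inv' = pd_matrix_inv[OF pd_add_psd[OF assms(1,3)]]
  have "matrix_inv (R + P) *v ((R + P) *v u) = u" "(R + P') *v (matrix_inv (R + P') *v u) = u" for u
    by (simp_all add: matrix_vector_mul_assoc inv(2) inv'(1))
  then have "(matrix_inv (R + P) - matrix_inv (R + P')) *v y
      = matrix_inv (R + P) *v ((R + P') *v (matrix_inv (R + P') *v y))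
        - matrix_inv (R + P) *v ((R + P) *v (matrix_inv (R + P') *v y))"
    by (simp add: matrix_vector_mult_diff_rdistrib)
  then show ?thesis
    by (simp add: matrix_vector_mult_diff_distrib[symmetric] matrix_vector_mult_diff_rdistrib[symmetric])
qed

lemma tendsto_matrix_inv_pd_add_psd:
  fixes R :: "real^'m^'m" and P :: "nat \<Rightarrow> real^'m^'m"
  assumes R: "pd R" and P: "\<And>k. psd (P k)" "psd P0" and lim: "P \<longlonglongrightarrow> P0"
  shows "(\<lambda>k. matrix_inv (R + P k)) \<longlonglongrightarrow> matrix_inv (R + P0)"
proof -
  obtain c where c: "0 < c" "\<And>x. c * (x \<bullet> x) \<le> x \<bullet> (R *v x)"
    using pd_coercive[OF R] by blast
  define G where "G k = matrix_inv (R + P k)" for k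
  define G0 where "G0 = matrix_inv (R + P0)"
  have "(\<lambda>k. (G k - G0) *v y) \<longlonglongrightarrow> 0" for y
  proof (rule Lim_null_comparison)
    show "\<forall>\<^sub>F k in sequentially. norm ((G k - G0) *v y) \<le> norm ((P0 - P k) *v (G0 *v y)) / c"
      unfolding G_def G0_def matrix_inv_pd_add_psd_diff[OF R P]
      using norm_matrix_inv_pd_add_psd_le[OF R P(1) c] by simp
    have "(\<lambda>k. (P0 - P k) *v (G0 *v y)) \<longlonglongrightarrow> (P0 - P0) *v (G0 *v y)"
      by (intro tendsto_matrix_vector_mult tendsto_diff tendsto_const lim)
    then show "(\<lambda>k. norm ((P0 - P k) *v (G0 *v y)) / c) \<longlonglongrightarrow> 0"
      by (intro tendsto_divide_zero tendsto_norm_zero) simp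
  qed
  then have "(\<lambda>k. ((G k - G0) *v axis j 1) $ i) \<longlonglongrightarrow> 0" for i j
    by (metis tendsto_vec_nth zero_index)
  then have "(\<lambda>k. G k $ i $ j) \<longlonglongrightarrow> G0 $ i $ j" for i j
    by (simp add: matrix_vector_mult_def axis_def if_distrib cong: if_cong) (simp add: LIM_zero_iff)
  then show ?thesis unfolding G_def[symmetric] G0_def[symmetric]
    by (intro vec_tendstoI) auto
qed

section \<open>The Riccati operator and the Newton step\<close>

lemma sum_UNIV_Plus:
  "sum f (UNIV :: ('a::finite + 'b::finite) set) = (\<Sum>a\<in>UNIV. f (Inl a)) + (\<Sum>b\<in>UNIV. f (Inr b))"
  by (simp add: UNIV_Plus_UNIV[symmetric] sum.Plus o_def del: UNIV_Plus_UNIV)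

lemma vstack_blockm_vstack:
  fixes U :: "real^'k^'a" and V :: "real^'k^'c" and U' :: "real^'l^'a" and V' :: "real^'l^'c"
  shows "transpose (vstack U V) ** blockm M11 M12 M21 M22 ** vstack U' V'
    = transpose U ** M11 ** U' + transpose U ** M12 ** V' + transpose V ** M21 ** U' + transpose V ** M22 ** V'"
  by (simp add: Finite_Cartesian_Product.vec_eq_iff matrix_matrix_mult_def transpose_def vstack_def
      blockm_def sum_UNIV_Plus sum.distrib distrib_right sum_distrib_right)

lemma Pi_diff:
  "Pi11 r A0 (Y - Z) = Pi11 r A0 Y - Pi11 r A0 Z"
  "Pi12 r A0 B0 (Y - Z) = Pi12 r A0 B0 Y - Pi12 r A0 B0 Z"
  "Pi22 r B0 (Y - Z) = Pi22 r B0 Y - Pi22 r B0 Z"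
  unfolding Pi11_def Pi12_def Pi22_def
  by (simp_all add: matrix_diff_ldistrib matrix_diff_rdistrib sum_subtractf)

lemma Pi22_psd: "psd Y \<Longrightarrow> psd (Pi22 r B0 Y)"
  unfolding Pi22_def by (simp add: psd_sum psd_congruence)

lemma tendsto_Pi:
  assumes "(X \<longlongrightarrow> Y) F"
  shows "((\<lambda>k. Pi11 r A0 (X k)) \<longlongrightarrow> Pi11 r A0 Y) F"
    and "((\<lambda>k. Pi12 r A0 B0 (X k)) \<longlongrightarrow> Pi12 r A0 B0 Y) F"
    and "((\<lambda>k. Pi22 r B0 (X k)) \<longlongrightarrow> Pi22 r B0 Y) F"
  unfolding Pi11_def Pi12_def Pi22_def
  by (intro tendsto_sum tendsto_matrix_mult tendsto_const assms)+

lemma completion_of_squares: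
  fixes A X Q P11 :: "real^'n^'n" and B L P12 :: "real^'m^'n" and Rc G :: "real^'m^'m"
    and F :: "real^'n^'m"
  assumes X: "transpose X = X" and G1: "Rc ** G = mat 1" and G2: "G ** Rc = mat 1"
    and Gs: "transpose G = G"
  defines "S \<equiv> X ** B + L + P12"
  shows "transpose (A + B ** F) ** X + X ** (A + B ** F) + P11 + P12 ** F + transpose F ** transpose P12
      + Q + L ** F + transpose F ** transpose L + transpose F ** Rc ** F
    = (transpose A ** X + X ** A + Q + P11 - S ** G ** transpose S)
      + transpose (F + G ** transpose S) ** Rc ** (F + G ** transpose S)"
proof -
  have G1': "Rc ** (G ** Y) = Y" and G2': "G ** (Rc ** Y) = Y" for Y :: "real^'k^'m"
    by (simp_all add: matrix_mul_assoc G1 G2)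
  show ?thesis unfolding S_def
    by (simp add: matrix_algebra_simps X Gs G1' G2' algebra_simps)
qed

locale riccati =
  fixes A Q :: "real^'n^'n" and B L :: "real^'m^'n" and R :: "real^'m^'m"
    and r :: nat and A0 :: "nat \<Rightarrow> real^'n^'n" and B0 :: "nat \<Rightarrow> real^'m^'n"
  assumes R_pd: "pd R" and cost_psd: "psd (blockm Q L (transpose L) R)"
begin

abbreviation ric :: "real^'n^'n \<Rightarrow> real^'n^'n" where
  "ric \<equiv> Ric A B Q L R r A0 B0"

definition gain :: "real^'n^'n \<Rightarrow> real^'n^'m" where
  "gain Y = matrix_inv (R + Pi22 r B0 Y) ** transpose (Y ** B + L + Pi12 r A0 B0 Y)"

text \<open>For a feedback F and P = [I; F], Pi_hat F Y and M_hat F are the paper's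
  P^T \<Pi>(Y) P and P^T [Q L; L^T R] P; the Newton step uses F = - gain X_k.\<close>

definition Pi_hat :: "real^'n^'m \<Rightarrow> real^'n^'n \<Rightarrow> real^'n^'n" where
  "Pi_hat F Y = transpose (vstack (mat 1) F) ** PiM r A0 B0 Y ** vstack (mat 1) F"

definition M_hat :: "real^'n^'m \<Rightarrow> real^'n^'n" where
  "M_hat F = transpose (vstack (mat 1) F) ** blockm Q L (transpose L) R ** vstack (mat 1) F"

definition closed_loop :: "real^'n^'m \<Rightarrow> real^'n^'n \<Rightarrow> real^'n^'n \<Rightarrow> real^'n^'n" where
  "closed_loop F Z Y = lyap (A + B ** F) Z + Pi_hat F Y + M_hat F"

lemma Pi_hat_expand:
  "Pi_hat F Y = Pi11 r A0 Y + Pi12 r A0 B0 Y ** F + transpose F ** transpose (Pi12 r A0 B0 Y)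
     + transpose F ** Pi22 r B0 Y ** F"
  unfolding Pi_hat_def PiM_def vstack_blockm_vstack by simp

lemma M_hat_expand: "M_hat F = Q + L ** F + transpose F ** transpose L + transpose F ** R ** F"
  unfolding M_hat_def vstack_blockm_vstack by simp

lemma Pi_hat_psd:
  assumes "psd Y"
  shows "psd (Pi_hat F Y)"
proof -
  have "Pi_hat F Y = (\<Sum>i\<in>{1..r}. transpose (A0 i + B0 i ** F) ** Y ** (A0 i + B0 i ** F))"
    unfolding Pi_hat_expand Pi11_def Pi12_def Pi22_def
    by (simp add: matrix_sum_mult matrix_mult_sum matrix_transpose_sum matrix_algebra_simps
        sum.distrib psd_symmetric[OF assms] add_ac)
  then show ?thesis by (simp add: psd_sum psd_congruence assms)
qed

lemma Pi_hat_zero [simp]: "Pi_hat F 0 = 0"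
  by (simp add: Pi_hat_expand Pi11_def Pi12_def Pi22_def matrix_transpose_zero)

lemma M_hat_psd: "psd (M_hat F)"
  unfolding M_hat_def by (rule psd_congruence[OF cost_psd])

lemma closed_loop_diff:
  "closed_loop F Z Y - closed_loop F Z' Y' = lyap (A + B ** F) (Z - Z') + Pi_hat F (Y - Y')"
  unfolding closed_loop_def lyap_diff Pi_hat_expand Pi_diff
  by (simp add: matrix_algebra_simps algebra_simps)

lemma closed_loop_completion:
  assumes "psd Y"
  shows "closed_loop F Y Y = ric Y + transpose (F + gain Y) ** (R + Pi22 r B0 Y) ** (F + gain Y)"
proof -
  note inv = pd_matrix_inv[OF pd_add_psd[OF R_pd Pi22_psd[OF assms]]]
  have "closed_loop F Y Y = transpose (A + B ** F) ** Y + Y ** (A + B ** F) + Pi11 r A0 Y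
      + Pi12 r A0 B0 Y ** F + transpose F ** transpose (Pi12 r A0 B0 Y)
      + Q + L ** F + transpose F ** transpose L + transpose F ** (R + Pi22 r B0 Y) ** F"
    unfolding closed_loop_def lyap_def Pi_hat_expand M_hat_expand
    by (simp add: matrix_algebra_simps add_ac)
  also have "\<dots> = ric Y + transpose (F + gain Y) ** (R + Pi22 r B0 Y) ** (F + gain Y)"
    unfolding Ric_def gain_def
    by (rule completion_of_squares[OF psd_symmetric[OF assms] inv])
  finally show ?thesis .
qed

lemma closed_loop_gain: "psd Y \<Longrightarrow> closed_loop (- gain Y) Y Y = ric Y"
  by (simp add: closed_loop_completion)

lemma closed_loop_ge_ric: "psd Y \<Longrightarrow> loewner_ge (closed_loop F Y Y) (ric Y)"
  unfolding loewner_ge_def closed_loop_completion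
  by (simp add: psd_congruence pd_imp_psd pd_add_psd R_pd Pi22_psd)

lemma M_hat_form_eq_0:
  assumes "x \<bullet> (M_hat F *v x) = 0"
  shows "(Q - L ** matrix_inv R ** transpose L) *v x = 0"
    and "F *v x = - (matrix_inv R *v (transpose L *v x))"
proof -
  let ?P = "vstack (mat 1) F :: real^'n^('n + 'm)" and ?\<Phi> = "blockm Q L (transpose L) R"
  have "(?P *v x) \<bullet> (?\<Phi> *v (?P *v x)) = 0"
    using assms unfolding M_hat_def
    by (simp only: matrix_vector_mul_assoc[symmetric] inner_transpose_mult)
  then have \<Phi>P: "?\<Phi> *v (?P *v x) = 0" by (rule psd_form_eq_0_imp_kernel[OF cost_psd])
  have "(transpose (vstack (mat 1) 0 :: real^'n^('n + 'm)) ** ?\<Phi> ** ?P) *v x = 0"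
    using \<Phi>P by (simp add: matrix_vector_mul_assoc[symmetric])
  then have top: "Q *v x + L *v (F *v x) = 0"
    by (simp add: vstack_blockm_vstack matrix_transpose_zero matrix_vector_mult_add_rdistrib
        matrix_vector_mul_assoc)
  have "(transpose (vstack 0 (mat 1) :: real^'m^('n + 'm)) ** ?\<Phi> ** ?P) *v x = 0"
    using \<Phi>P by (simp add: matrix_vector_mul_assoc[symmetric])
  then have "transpose L *v x + R *v (F *v x) = 0"
    by (simp add: vstack_blockm_vstack matrix_transpose_zero matrix_vector_mult_add_rdistrib
        matrix_vector_mul_assoc)
  then have "matrix_inv R *v (R *v (F *v x)) = - (matrix_inv R *v (transpose L *v x))"
    by (metis add.commute add_eq_0_iff matrix_vector_mult_diff_distrib diff_0 matrix_vector_mult_0_right)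
  then show Fx: "F *v x = - (matrix_inv R *v (transpose L *v x))"
    by (simp add: matrix_vector_mul_assoc matrix_mul_assoc pd_matrix_inv(2)[OF R_pd])
  have "Q *v x - L *v (matrix_inv R *v (transpose L *v x)) = 0"
    using top by (simp add: Fx matrix_vector_mult_minus)
  then show "(Q - L ** matrix_inv R ** transpose L) *v x = 0"
    by (simp add: matrix_vector_mult_diff_rdistrib matrix_vector_mul_assoc[symmetric]
        del: transpose_matrix_vector)
qed

lemma newton_equation_iff:
  "(let Rk = R + Pi22 r B0 Y;
        Sk = Y ** B + L + Pi12 r A0 B0 Y;
        Ahk = A - B ** matrix_inv Rk ** transpose Sk;
        Pk = vstack (mat 1 :: real^'n^'n) (- (matrix_inv Rk ** transpose Sk));
        Pihk = transpose Pk ** PiM r A0 B0 Y ** Pk;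
        Mk = transpose Pk ** blockm Q L (transpose L) R ** Pk
    in transpose Ahk ** Z + Z ** Ahk + Pihk + Mk = 0) \<longleftrightarrow> closed_loop (- gain Y) Z Y = 0"
  unfolding Let_def closed_loop_def lyap_def Pi_hat_def M_hat_def gain_def
  by (simp add: matrix_mult_minus matrix_mul_assoc)

lemma tendsto_gain:
  assumes lim: "X \<longlonglongrightarrow> Y" and psd: "\<And>k. psd (X k)" "psd Y"
  shows "(\<lambda>k. gain (X k)) \<longlonglongrightarrow> gain Y"
proof -
  have "(\<lambda>k. matrix_inv (R + Pi22 r B0 (X k))) \<longlonglongrightarrow> matrix_inv (R + Pi22 r B0 Y)"
    using psd by (intro tendsto_matrix_inv_pd_add_psd R_pd Pi22_psd tendsto_Pi(3) lim)
  then show ?thesis unfolding gain_def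
    by (intro tendsto_matrix_mult tendsto_transpose tendsto_add tendsto_const tendsto_Pi(2) lim)
qed

lemma tendsto_closed_loop:
  assumes "(F \<longlongrightarrow> F0) G" "(Z \<longlongrightarrow> Z0) G" "(Y \<longlongrightarrow> Y0) G"
  shows "((\<lambda>k. closed_loop (F k) (Z k) (Y k)) \<longlongrightarrow> closed_loop F0 Z0 Y0) G"
  unfolding closed_loop_def lyap_def Pi_hat_expand M_hat_expand
  by (intro tendsto_add tendsto_matrix_mult tendsto_transpose tendsto_const tendsto_Pi assms)

lemma newton_limit:
  assumes lim: "X \<longlonglongrightarrow> Y" and psd: "\<And>k. psd (X k)"
    and newton: "\<And>k. closed_loop (- gain (X k)) (X (Suc k)) (X k) = 0"
  shows "psd Y" and "ric Y = 0"
proof -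
  show "psd Y" using lim psd by (rule psd_limit)
  have "(\<lambda>k. closed_loop (- gain (X k)) (X (Suc k)) (X k)) \<longlonglongrightarrow> closed_loop (- gain Y) Y Y"
    by (intro tendsto_closed_loop tendsto_minus tendsto_gain lim psd \<open>psd Y\<close> LIMSEQ_Suc)
  then have "closed_loop (- gain Y) Y Y = 0" unfolding newton by (simp add: LIMSEQ_const_iff)
  then show "ric Y = 0" using closed_loop_gain[OF \<open>psd Y\<close>] by simp
qed

end

locale detectable_riccati = riccati +
  assumes ker_Q_L: "\<forall>x. (Q - L ** matrix_inv R ** transpose L) *v x = 0 \<longrightarrow> transpose L *v x = 0"
    and detectable: "\<exists>K. hurwitz (A + K ** (Q - L ** matrix_inv R ** transpose L))"
begin

lemma M_hat_form_eq_0_kernel: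
  assumes "x \<bullet> (M_hat F *v x) = 0"
  shows "F *v x = 0" and "(Q - L ** matrix_inv R ** transpose L) *v x = 0"
  using M_hat_form_eq_0[OF assms] ker_Q_L by simp_all

text \<open>Along an unstable eigenvector the Lyapunov term is nonnegative, so the cost M_hat F
  vanishes there; the eigenvector is then unobservable, contradicting detectability.\<close>

lemma closed_loop_hurwitz:
  assumes Y: "psd Y" and nonpos: "loewner_ge 0 (closed_loop F Y Y)"
  shows "hurwitz (A + B ** F)"
  unfolding hurwitz_def
proof (intro allI impI, elim conjE, rule ccontr)
  fix z v assume "v \<noteq> 0" and eig: "cmat (A + B ** F) *v v = z *s v" and "\<not> Re z < 0"
  let ?a = "Re_vec v" and ?b = "Im_vec v" and ?Qt = "Q - L ** matrix_inv R ** transpose L"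
  let ?q = "\<lambda>N x. x \<bullet> (N *v x)"
  have "0 \<le> 2 * Re z * (?q Y ?a + ?q Y ?b)"
    using \<open>\<not> Re z < 0\<close> psd_nonneg[OF Y] by simp
  then have "0 \<le> ?q (lyap (A + B ** F) Y) ?a + ?q (lyap (A + B ** F) Y) ?b"
    unfolding lyap_form_Re_Im[OF psd_symmetric[OF Y] eig] .
  moreover have "?q (closed_loop F Y Y) ?a \<le> 0" "?q (closed_loop F Y Y) ?b \<le> 0"
    using nonpos unfolding loewner_ge_0_iff by blast+
  moreover have "0 \<le> ?q (Pi_hat F Y) ?a" "0 \<le> ?q (Pi_hat F Y) ?b"
    and "0 \<le> ?q (M_hat F) ?a" "0 \<le> ?q (M_hat F) ?b"
    by (simp_all add: psd_nonneg Pi_hat_psd[OF Y] M_hat_psd)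
  ultimately have "?q (M_hat F) ?a = 0" "?q (M_hat F) ?b = 0"
    by (simp_all add: closed_loop_def matrix_vector_mult_add_rdistrib inner_add_right)
  note ker_a = M_hat_form_eq_0_kernel[OF this(1)] and ker_b = M_hat_form_eq_0_kernel[OF this(2)]
  have "cmat (B ** F) *v v = 0"
    by (rule cmat_kernel_Re_Im) (simp_all add: matrix_vector_mul_assoc[symmetric] ker_a ker_b)
  then have "cmat A *v v = z *s v"
    using eig by (simp add: cmat_add matrix_vector_mult_add_rdistrib)
  moreover have "cmat ?Qt *v v = 0"
    using ker_a ker_b by (intro cmat_kernel_Re_Im)
  ultimately have "cmat (A + K ** ?Qt) *v v = z *s v" for K
    by (simp add: cmat_add cmat_mult matrix_vector_mult_add_rdistrib matrix_vector_mul_assoc[symmetric])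
  then show False
    using detectable \<open>v \<noteq> 0\<close> \<open>\<not> Re z < 0\<close> unfolding hurwitz_def by blast
qed

text \<open>With F the feedback of Y, the differences Y - Y' and Y' - Xs satisfy Lyapunov
  inequalities for the Hurwitz matrix A + B F, and ric Y' is bounded by the closed-loop
  expression at Y'.\<close>

lemma newton_step:
  assumes Y: "psd Y" and Y': "psd Y'" and Xs: "psd Xs" "ric Xs = 0"
    and ge: "loewner_ge Y Xs" and ric_nonpos: "loewner_ge 0 (ric Y)"
    and newton: "closed_loop (- gain Y) Y' Y = 0"
  shows "loewner_ge Y Y'" and "loewner_ge Y' Xs" and "loewner_ge 0 (ric Y')"
proof -
  define F where "F = - gain Y"
  have cl_Y: "closed_loop F Y Y = ric Y" unfolding F_def by (rule closed_loop_gain[OF Y])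
  have hur: "hurwitz (A + B ** F)" using closed_loop_hurwitz[OF Y] ric_nonpos cl_Y by simp
  have sym: "transpose Y = Y" "transpose Y' = Y'" "transpose Xs = Xs"
    using Y Y' Xs by (simp_all add: psd_symmetric)
  have "lyap (A + B ** F) (Y - Y') = ric Y"
    using closed_loop_diff[of F Y Y Y' Y] cl_Y newton by (simp add: F_def)
  then show YY': "loewner_ge Y Y'"
    unfolding loewner_ge_def
    by (intro hurwitz_lyapunov_psd[OF hur]) (simp_all add: ric_nonpos sym matrix_transpose_diff)
  have "lyap (A + B ** F) (Y' - Xs) = - (Pi_hat F (Y - Xs) + (closed_loop F Xs Xs - ric Xs))"
    using closed_loop_diff[of F Y' Y Xs Xs] newton Xs(2) by (simp add: F_def algebra_simps)
  moreover have "psd (Pi_hat F (Y - Xs) + (closed_loop F Xs Xs - ric Xs))"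
    using ge closed_loop_ge_ric[OF Xs(1)] unfolding loewner_ge_def by (simp add: psd_add Pi_hat_psd)
  ultimately have "loewner_ge 0 (lyap (A + B ** F) (Y' - Xs))"
    unfolding loewner_ge_def by (simp only: diff_0 minus_minus)
  then have "psd (Y' - Xs)"
    by (rule hurwitz_lyapunov_psd[OF hur, rotated]) (simp add: sym matrix_transpose_diff)
  then show "loewner_ge Y' Xs" unfolding loewner_ge_def .
  have "Pi_hat F (Y - Y') = - closed_loop F Y' Y'"
    using closed_loop_diff[of F Y' Y Y' Y'] newton by (simp add: F_def lyap_def)
  then have "0 - ric Y' = (closed_loop F Y' Y' - ric Y') + Pi_hat F (Y - Y')" by simp
  moreover have "psd (closed_loop F Y' Y' - ric Y')"
    using closed_loop_ge_ric[OF Y'] unfolding loewner_ge_def .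
  moreover have "psd (Pi_hat F (Y - Y'))" using YY' unfolding loewner_ge_def by (rule Pi_hat_psd)
  ultimately show "loewner_ge 0 (ric Y')" unfolding loewner_ge_def by (metis psd_add)
qed

end

theorem theoremC3:
  fixes A Q :: "real^'n^'n" and B L :: "real^'m^'n" and R :: "real^'m^'m"
    and r :: nat and A0 :: "nat \<Rightarrow> real^'n^'n" and B0 :: "nat \<Rightarrow> real^'m^'n"
    and C :: "real^'n^'p"
    and Xs :: "real^'n^'n" and X :: "nat \<Rightarrow> real^'n^'n"
  assumes A00: "A0 0 = A" and B00: "B0 0 = B"
    \<comment> \<open>(1)\<close>
    and R_pd: "pd R"
    and QLR_psd: "psd (blockm Q L (transpose L) R)"
    \<comment> \<open>(2)\<close>
    and stab2: "\<exists>F :: real^'n^'m. exp_stable (\<lambda>S.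
         (A + B ** F) ** S + S ** transpose (A + B ** F)
         + (\<Sum>i\<in>{1..r}. (A0 i + B0 i ** F) ** S ** transpose (A0 i + B0 i ** F)))"
    \<comment> \<open>(3)\<close>
    and C_fact: "transpose C ** C = Q - L ** matrix_inv R ** transpose L"
    and detect3: "\<exists>K :: real^'p^'n. exp_stable (\<lambda>S.
         ((A0 0 - B0 0 ** matrix_inv R ** transpose L) + K ** C) ** S
         + S ** transpose ((A0 0 - B0 0 ** matrix_inv R ** transpose L) + K ** C)
         + (\<Sum>i\<in>{1..r}. (A0 i - B0 i ** matrix_inv R ** transpose L) ** S
                           ** transpose (A0 i - B0 i ** matrix_inv R ** transpose L)))"
    \<comment> \<open>(4)\<close>
    and nullsp: "\<forall>x. (Q - L ** matrix_inv R ** transpose L) *v x = 0 \<longrightarrow>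
                    transpose L *v x = 0 \<and> (\<forall>i\<in>{1..r}. A0 i *v x = 0)"
    \<comment> \<open>(5)\<close>
    and stabilizable: "\<exists>F :: real^'n^'m. hurwitz (A + B ** F)"
    and detectable: "\<exists>K :: real^'n^'n. hurwitz (A + K ** (Q - L ** matrix_inv R ** transpose L))"
    \<comment> \<open>X_* is the unique positive semidefinite solution of \<R>(X) = 0\<close>
    and Xs_psd: "psd Xs" and Xs_sol: "Ric A B Q L R r A0 B0 Xs = 0"
    and Xs_unique: "\<forall>Y. psd Y \<and> Ric A B Q L R r A0 B0 Y = 0 \<longrightarrow> Y = Xs"
    \<comment> \<open>the modified Newton iteration\<close>
    and X0_sym: "transpose (X 0) = X 0"
    and newton: "\<forall>k. let Rk = R + Pi22 r B0 (X k);
                        Sk = X k ** B + L + Pi12 r A0 B0 (X k);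
                        Ahk = A - B ** matrix_inv Rk ** transpose Sk;
                        Pk = vstack (mat 1 :: real^'n^'n) (- (matrix_inv Rk ** transpose Sk));
                        Pihk = transpose Pk ** PiM r A0 B0 (X k) ** Pk;
                        Mk = transpose Pk ** blockm Q L (transpose L) R ** Pk
                    in transpose Ahk ** X (Suc k) + X (Suc k) ** Ahk + Pihk + Mk = 0"
    and X0_ge: "loewner_ge (X 0) Xs"
    and X0_hurwitz: "hurwitz (Ac A B L R r A0 B0 (X 0) - Gc B R r B0 (X 0) ** X 0)"
    and X0_Ric: "loewner_ge 0 (Ric A B Q L R r A0 B0 (X 0))"
    and Xk_psd: "\<forall>k. psd (X k)"
  shows "(\<forall>k. loewner_ge (X k) (X (Suc k)) \<and> loewner_ge (X k) Xs
              \<and> loewner_ge 0 (Ric A B Q L R r A0 B0 (X k)))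
         \<and> X \<longlonglongrightarrow> Xs"
proof -
  interpret detectable_riccati A Q B L R r A0 B0
    using R_pd QLR_psd nullsp detectable by unfold_locales blast+
  txt \<open>Only (1), the L-part of (4), detectability and the hypotheses on X_* and the iterates
    are used.\<close>
  have newton_k: "closed_loop (- gain (X k)) (X (Suc k)) (X k) = 0" for k
    using newton[rule_format, of k] unfolding newton_equation_iff .
  note step = newton_step[OF Xk_psd[rule_format] Xk_psd[rule_format] Xs_psd Xs_sol _ _ newton_k]
  have invariant: "loewner_ge (X k) Xs \<and> loewner_ge 0 (ric (X k))" for k
    by (induction k) (use X0_ge X0_Ric step in auto)
  have decreasing: "loewner_ge (X k) (X (Suc k))" for k
    using step(1) invariant by blast
  obtain Y where lim: "X \<longlonglongrightarrow> Y"
    using decseq_loewner_convergent[of X Xs] decreasing invariant Xk_psd psd_symmetric by blast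
  have "Y = Xs"
    using Xs_unique newton_limit[OF lim _ newton_k] Xk_psd by blast
  then show ?thesis using invariant decreasing lim by blast
qed

end
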